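(* Let $X$ be a real Banach lattice which is convex-transitive and such that every surjective linear isometry $T: X\to X$ is disjointness-preserving. If there exists an atom $x\in S_X$, then $X$ is one-dimensional.
   Context: $X$ is convex-transitive if $\overline{\mathrm{conv}}(\{T(y):T\in\mathcal{G}_X\})=B_X$ for every $y\in S_X$, where $\mathcal{G}_X$ is the group of surjective linear isometries of $X$. Elements $x,y$ are disjoint if $|x|\wedge|y|=0$; $T$ is disjointness-preserving if $T(x),T(y)$ are disjoint whenever $x,y$ are. A point $a\neq0$ is an atom if $\{v\in X: 0\le v\le|a|\}=\{\lambda|a|: 0\le\lambda\le1\}$. *)

theory Defs
  imports "HOL-Analysis.Analysis"
begin

text \<open>A real Banach lattice is modelled as a type of class banach (real Banach space)
  that is also an ordered real vector space whose order is a lattice (a Riesz space),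
  and whose norm is a lattice norm.\<close>

definition lat_abs :: "'a::{lattice, ab_group_add} \<Rightarrow> 'a" where
  "lat_abs x = sup x (- x)"

definition lattice_norm :: "('a::{real_normed_vector, lattice, ordered_real_vector}) itself \<Rightarrow> bool" where
  "lattice_norm _ \<longleftrightarrow> (\<forall>x y::'a. lat_abs x \<le> lat_abs y \<longrightarrow> norm x \<le> norm y)"

definition banach_lattice :: "('a::{banach, lattice, ordered_real_vector}) itself \<Rightarrow> bool" where
  "banach_lattice t \<longleftrightarrow> lattice_norm t"

definition isometry_group :: "('a::real_normed_vector \<Rightarrow> 'a) set" where
  "isometry_group = {T. linear T \<and> surj T \<and> (\<forall>x. norm (T x) = norm x)}"

definition convex_transitive :: "('a::real_normed_vector) itself \<Rightarrow> bool" where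
  "convex_transitive _ \<longleftrightarrow>
     (\<forall>y::'a. norm y = 1 \<longrightarrow>
        closure (convex hull {T y | T. T \<in> isometry_group}) = cball 0 1)"

definition disjoint_el :: "'a::{lattice, ab_group_add} \<Rightarrow> 'a \<Rightarrow> bool" where
  "disjoint_el x y \<longleftrightarrow> inf (lat_abs x) (lat_abs y) = 0"

definition disjointness_preserving :: "('a::{lattice, ab_group_add} \<Rightarrow> 'a) \<Rightarrow> bool" where
  "disjointness_preserving T \<longleftrightarrow> (\<forall>x y. disjoint_el x y \<longrightarrow> disjoint_el (T x) (T y))"

definition is_atom :: "'a::{lattice, ordered_real_vector} \<Rightarrow> bool" where
  "is_atom a \<longleftrightarrow> a \<noteq> 0 \<and>
     {v. 0 \<le> v \<and> v \<le> lat_abs a} = {l *\<^sub>R lat_abs a | l. 0 \<le> l \<and> l \<le> 1}"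

end

theory Submission
  imports Defs "HOL-Library.Lattice_Algebras"
begin

text \<open>
  Let \<open>x\<close> be a unit atom; then \<open>a = |x|\<close> is a positive unit atom. The proof is organised
  around the coordinate functional \<open>\<phi>\<close> along \<open>a\<close>: every vector \<open>w\<close> splits uniquely as
  \<open>w = \<phi>(w) a + r\<close> with \<open>r\<close> disjoint from \<open>a\<close>, and \<open>\<phi>\<close> is linear of norm at most one.

  Since
  isometries and their inverses preserve disjointness and \<open>a\<close> cannot be split into two
  disjoint nonzero parts, every isometry maps \<open>a\<close> either to \<open>\<plusminus>a\<close> or to a vector with
  \<open>\<phi> = 0\<close>. Convex transitivity turns bounds on an orbit into bounds on the unit ball for
  continuous convex functions. Applied to \<open>\<phi>\<close> on the orbit of \<open>(a + z)/\<parallel>a + z\<parallel>\<close> it gives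
  \<open>\<parallel>a + z\<parallel> \<le> 1\<close> for every unit vector \<open>z\<close> disjoint from \<open>a\<close>; applied to
  \<open>\<parallel>v - a\<parallel> + 2\<phi>(v)\<close> on the orbit of \<open>a\<close> it then forces \<open>\<parallel>z\<parallel> = 0\<close>. Hence nothing nonzero is
  disjoint from \<open>a\<close>, i.e. every vector is a multiple of \<open>a\<close>.
\<close>

section \<open>Arithmetic in Riesz spaces\<close>

text \<open>A lattice-ordered real vector space is in particular a lattice-ordered group, so the
  group-theoretic lattice identities of the library apply to it.\<close>

lemma riesz_space_lattice_group:
  "class.lattice_ab_group_add (+) (0::'a::{lattice, ordered_real_vector}) (-) uminus (\<le>) (<) inf sup"
  "class.semilattice_inf_ab_group_add (+) (0::'a) (-) uminus (\<le>) (<) inf"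
  "class.semilattice_sup_ab_group_add (+) (0::'a) (-) uminus (\<le>) (<) sup"
  by intro_locales

lemma riesz_inf_add_distrib:
  fixes x :: "'a::{lattice, ordered_real_vector}"
  shows "inf x y + z = inf (x + z) (y + z)"
  using riesz_space_lattice_group(2) by (rule semilattice_inf_ab_group_add.add_inf_distrib_right)

lemma riesz_sup_add_distrib:
  fixes x :: "'a::{lattice, ordered_real_vector}"
  shows "sup x y + z = sup (x + z) (y + z)"
  using riesz_space_lattice_group(3) by (rule semilattice_sup_ab_group_add.add_sup_distrib_right)

lemmas riesz_inf_eq_neg_sup =
  lattice_ab_group_add.inf_eq_neg_sup[OF riesz_space_lattice_group(1)]
lemmas riesz_double_nonneg_iff =
  lattice_ab_group_add.zero_le_double_add_iff_zero_le_single_add[OF riesz_space_lattice_group(1)]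
lemmas riesz_sup_neg_eq_0_iff =
  lattice_ab_group_add.sup_0_eq_0[OF riesz_space_lattice_group(1)]

lemma scaleR_sup_nonneg:
  fixes x :: "'a::{lattice, ordered_real_vector}"
  assumes "0 \<le> t"
  shows "t *\<^sub>R sup x y = sup (t *\<^sub>R x) (t *\<^sub>R y)"
proof (cases "t = 0")
  case False
  with assms have t: "0 < t" by simp
  let ?s = "sup (t *\<^sub>R x) (t *\<^sub>R y)"
  show ?thesis
  proof (rule order.antisym)
    have "sup x y \<le> ?s /\<^sub>R t"
      using t by (simp add: pos_le_divideR_eq)
    then show "t *\<^sub>R sup x y \<le> ?s"
      using pos_le_divideR_eq[OF t] by blast
    show "?s \<le> t *\<^sub>R sup x y"
      using assms by (simp add: scaleR_left_mono)
  qed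
qed simp

lemma scaleR_inf_nonneg:
  fixes x :: "'a::{lattice, ordered_real_vector}"
  assumes "0 \<le> t"
  shows "t *\<^sub>R inf x y = inf (t *\<^sub>R x) (t *\<^sub>R y)"
  using scaleR_sup_nonneg[OF assms, of "-x" "-y"] by (simp add: riesz_inf_eq_neg_sup)

lemma riesz_inf_add_le:
  fixes a b c :: "'a::{lattice, ordered_real_vector}"
  assumes "0 \<le> a" "0 \<le> b" "0 \<le> c"
  shows "inf c (a + b) \<le> inf c a + inf c b"
proof -
  have "inf c a + inf c b = inf (c + inf c b) (a + inf c b)"
    by (rule riesz_inf_add_distrib)
  also have "\<dots> = inf (inf (c + c) (b + c)) (inf (c + a) (b + a))"
    using riesz_inf_add_distrib[of c b c] riesz_inf_add_distrib[of c b a]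
    by (simp add: add.commute)
  moreover have "c \<le> c + c" "c \<le> b + c" "c \<le> c + a"
    using assms by (simp_all add: add_increasing add_increasing2)
  ultimately show ?thesis
    by (simp add: le_infI1 le_infI2 add.commute)
qed

lemma lat_abs_ge: "x \<le> lat_abs x" "- x \<le> lat_abs x"
  by (simp_all add: lat_abs_def)

lemma lat_abs_nonneg: "0 \<le> lat_abs (x::'a::{lattice, ordered_real_vector})"
proof -
  have "x + - x \<le> lat_abs x + lat_abs x"
    using lat_abs_ge by (rule add_mono)
  then show ?thesis by (simp add: riesz_double_nonneg_iff)
qed

lemma lat_abs_of_nonneg: "0 \<le> (x::'a::{lattice, ordered_real_vector}) \<Longrightarrow> lat_abs x = x"
  unfolding lat_abs_def by (rule sup_absorb1) (rule order.trans[of _ 0]; simp)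

lemma lat_abs_idem [simp]: "lat_abs (lat_abs (x::'a::{lattice, ordered_real_vector})) = lat_abs x"
  by (simp add: lat_abs_nonneg lat_abs_of_nonneg)

lemma lat_abs_minus [simp]: "lat_abs (- (x::'a::{lattice, ordered_real_vector})) = lat_abs x"
  unfolding lat_abs_def by (simp add: sup_commute)

lemma lat_abs_eq_0_iff [simp]: "lat_abs (x::'a::{lattice, ordered_real_vector}) = 0 \<longleftrightarrow> x = 0"
  unfolding lat_abs_def by (rule riesz_sup_neg_eq_0_iff)

lemma lat_abs_scaleR: "lat_abs (t *\<^sub>R (x::'a::{lattice, ordered_real_vector})) = \<bar>t\<bar> *\<^sub>R lat_abs x"
proof (cases "0 \<le> t")
  case True
  then show ?thesis by (simp add: lat_abs_def scaleR_sup_nonneg)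
next
  case False
  then have "lat_abs (t *\<^sub>R x) = (- t) *\<^sub>R lat_abs (- x)"
    using scaleR_sup_nonneg[of "- t" "- x" x] by (simp add: lat_abs_def sup_commute)
  with False show ?thesis by simp
qed

lemma lat_abs_triangle: "lat_abs (x + y) \<le> lat_abs x + lat_abs (y::'a::{lattice, ordered_real_vector})"
  unfolding lat_abs_def[of "x + y"]
proof (rule sup_least)
  show "x + y \<le> lat_abs x + lat_abs y"
    by (intro add_mono lat_abs_ge)
  have "- x + - y \<le> lat_abs x + lat_abs y"
    by (intro add_mono lat_abs_ge)
  then show "- (x + y) \<le> lat_abs x + lat_abs y" by simp
qed

section \<open>Disjointness\<close>

lemma disjoint_el_sym: "disjoint_el x y \<Longrightarrow> disjoint_el y x"
  unfolding disjoint_el_def by (simp add: inf_commute)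

lemma disjoint_el_minus: "disjoint_el x y \<Longrightarrow> disjoint_el (- x) (y::'a::{lattice, ordered_real_vector})"
  unfolding disjoint_el_def by simp

lemma disjoint_el_zero [simp]: "disjoint_el 0 (x::'a::{lattice, ordered_real_vector})"
  unfolding disjoint_el_def using lat_abs_nonneg[of x] by (simp add: lat_abs_def[of 0] inf_absorb1)

lemma disjoint_el_add:
  fixes r s a :: "'a::{lattice, ordered_real_vector}"
  assumes r: "disjoint_el r a" and s: "disjoint_el s a"
  shows "disjoint_el (r + s) a"
proof -
  have "inf (lat_abs (r + s)) (lat_abs a) \<le> inf (lat_abs a) (lat_abs r + lat_abs s)"
    using lat_abs_triangle[of r s] by (simp add: inf_commute le_infI2)
  also have "\<dots> \<le> inf (lat_abs a) (lat_abs r) + inf (lat_abs a) (lat_abs s)"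
    by (rule riesz_inf_add_le) (simp_all add: lat_abs_nonneg)
  also have "\<dots> = 0"
    using r s by (simp add: disjoint_el_def inf_commute)
  finally show ?thesis
    unfolding disjoint_el_def by (simp add: order.antisym lat_abs_nonneg)
qed

lemma disjoint_el_scaleR:
  fixes r a :: "'a::{lattice, ordered_real_vector}"
  assumes r: "disjoint_el r a"
  shows "disjoint_el (t *\<^sub>R r) a"
proof -
  define m where "m = max \<bar>t\<bar> 1"
  have m: "0 \<le> m" "\<bar>t\<bar> \<le> m" "1 \<le> m" unfolding m_def by auto
  have "\<bar>t\<bar> *\<^sub>R lat_abs r \<le> m *\<^sub>R lat_abs r" "1 *\<^sub>R lat_abs a \<le> m *\<^sub>R lat_abs a"
    using m by (simp_all only: scaleR_right_mono lat_abs_nonneg)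
  then have "inf (lat_abs (t *\<^sub>R r)) (lat_abs a) \<le> inf (m *\<^sub>R lat_abs r) (m *\<^sub>R lat_abs a)"
    unfolding lat_abs_scaleR by (intro inf_mono) simp_all
  also have "\<dots> = m *\<^sub>R inf (lat_abs r) (lat_abs a)"
    using m by (simp add: scaleR_inf_nonneg)
  also have "\<dots> = 0"
    using r by (simp add: disjoint_el_def)
  finally show ?thesis
    unfolding disjoint_el_def by (simp add: order.antisym lat_abs_nonneg)
qed

lemma disjoint_el_diff:
  "disjoint_el r a \<Longrightarrow> disjoint_el s a \<Longrightarrow> disjoint_el (r - s) (a::'a::{lattice, ordered_real_vector})"
  unfolding diff_conv_add_uminus by (intro disjoint_el_add disjoint_el_minus)

lemma disjoint_el_multiple_self:
  fixes a :: "'a::{lattice, ordered_real_vector}"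
  assumes a: "0 \<le> a" "a \<noteq> 0" and d: "disjoint_el (t *\<^sub>R a) a"
  shows "t = 0"
proof -
  have e: "inf (\<bar>t\<bar> *\<^sub>R a) (1 *\<^sub>R a) = 0"
    using d a by (simp add: disjoint_el_def lat_abs_scaleR lat_abs_of_nonneg)
  have "\<bar>t\<bar> *\<^sub>R a \<le> 1 *\<^sub>R a \<or> 1 *\<^sub>R a \<le> \<bar>t\<bar> *\<^sub>R a"
    using a(1) by (meson linorder_le_cases scaleR_right_mono)
  then have "\<bar>t\<bar> *\<^sub>R a = 0 \<or> a = 0"
    using e by (auto simp: inf_absorb1 inf_absorb2)
  with a show ?thesis by simp
qed

lemma disjoint_el_summand_le:
  fixes p q :: "'a::{lattice, ordered_real_vector}"
  assumes d: "disjoint_el p q"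
  shows "lat_abs p \<le> lat_abs (p + q)"
proof -
  have "lat_abs p \<le> lat_abs (p + q) + lat_abs q"
    using lat_abs_triangle[of "p + q" "- q"] by simp
  then have "lat_abs p = inf (lat_abs p) (lat_abs (p + q) + lat_abs q)"
    by (simp add: inf_absorb1)
  also have "\<dots> \<le> inf (lat_abs p) (lat_abs (p + q)) + inf (lat_abs p) (lat_abs q)"
    by (rule riesz_inf_add_le) (simp_all add: lat_abs_nonneg)
  also have "\<dots> \<le> lat_abs (p + q)"
    using d by (simp add: disjoint_el_def)
  finally show ?thesis .
qed

lemma lattice_normD:
  "lattice_norm TYPE('a::{real_normed_vector, lattice, ordered_real_vector}) \<Longrightarrow>
   lat_abs u \<le> lat_abs (v::'a) \<Longrightarrow> norm u \<le> norm v"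
  unfolding lattice_norm_def by blast

lemma norm_lat_abs:
  "lattice_norm TYPE('a::{real_normed_vector, lattice, ordered_real_vector}) \<Longrightarrow>
   norm (lat_abs (x::'a)) = norm x"
  by (metis lattice_normD lat_abs_idem order.antisym order.refl)

lemma norm_mono_nonneg:
  "lattice_norm TYPE('a::{real_normed_vector, lattice, ordered_real_vector}) \<Longrightarrow>
   0 \<le> u \<Longrightarrow> u \<le> (v::'a) \<Longrightarrow> norm u \<le> norm v"
  by (rule lattice_normD) (simp_all add: lat_abs_of_nonneg)

section \<open>Atoms\<close>

lemma atom_interval:
  fixes a v :: "'a::{lattice, ordered_real_vector}"
  assumes "is_atom a" "0 \<le> a" "0 \<le> v" "v \<le> a"
  shows "\<exists>l. 0 \<le> l \<and> l \<le> 1 \<and> v = l *\<^sub>R a"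
  using assms unfolding is_atom_def by (auto simp: lat_abs_of_nonneg)

lemma atom_disjoint_split:
  fixes a p q :: "'a::{lattice, ordered_real_vector}"
  assumes at: "is_atom a" and a: "0 \<le> a" and s: "a = p + q" and d: "disjoint_el p q"
  shows "p = 0 \<or> q = 0"
proof -
  have "lat_abs p \<le> a" "lat_abs q \<le> a"
    using disjoint_el_summand_le[OF d] disjoint_el_summand_le[OF disjoint_el_sym[OF d]] s a
    by (simp_all add: lat_abs_of_nonneg add.commute)
  then obtain l m where l: "0 \<le> l" "lat_abs p = l *\<^sub>R a" and m: "0 \<le> m" "lat_abs q = m *\<^sub>R a"
    using atom_interval[OF at a lat_abs_nonneg] by metis
  have "inf (l *\<^sub>R a) (m *\<^sub>R a) = 0"
    using d l m by (simp add: disjoint_el_def)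
  moreover have "l *\<^sub>R a \<le> m *\<^sub>R a \<or> m *\<^sub>R a \<le> l *\<^sub>R a"
    using a by (meson linorder_le_cases scaleR_right_mono)
  ultimately have "lat_abs p = 0 \<or> lat_abs q = 0"
    using l m by (auto simp: inf_absorb1 inf_absorb2)
  then show ?thesis by simp
qed

section \<open>The coordinate along an atom\<close>

text \<open>For a positive atom \<open>a\<close>, every vector splits uniquely as a multiple of \<open>a\<close> plus a part
  disjoint from \<open>a\<close>; the multiplier is the coordinate of the vector along \<open>a\<close>.\<close>

definition atom_coord :: "'a::{lattice, ordered_real_vector} \<Rightarrow> 'a \<Rightarrow> real" where
  "atom_coord a w = (THE t. disjoint_el (w - t *\<^sub>R a) a)"

text \<open>Uniqueness of the splitting: the difference of two splittings is a multiple of \<open>a\<close>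
  disjoint from \<open>a\<close>.\<close>

lemma atom_coord_unique:
  fixes a w :: "'a::{lattice, ordered_real_vector}"
  assumes a: "0 \<le> a" "a \<noteq> 0" and s: "disjoint_el (w - s *\<^sub>R a) a" and t: "disjoint_el (w - t *\<^sub>R a) a"
  shows "s = t"
proof -
  have "disjoint_el ((w - s *\<^sub>R a) - (w - t *\<^sub>R a)) a"
    using s t by (rule disjoint_el_diff)
  then have "disjoint_el ((t - s) *\<^sub>R a) a"
    by (simp add: algebra_simps)
  then have "t - s = 0"
    by (rule disjoint_el_multiple_self[OF a])
  then show ?thesis by simp
qed

lemma atom_coord_eqI:
  fixes a w :: "'a::{lattice, ordered_real_vector}"
  assumes a: "0 \<le> a" "a \<noteq> 0" and t: "disjoint_el (w - t *\<^sub>R a) a"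
  shows "atom_coord a w = t"
  unfolding atom_coord_def using t by (rule the_equality) (rule atom_coord_unique[OF a _ t])

locale unit_atom =
  fixes a :: "'a::{real_normed_vector, lattice, ordered_real_vector}"
  assumes lattice_norm: "lattice_norm TYPE('a)"
    and atom: "is_atom a" and nonneg: "0 \<le> a" and norm_eq_1: "norm a = 1"
begin

lemma nonzero: "a \<noteq> 0"
  using norm_eq_1 by auto

text \<open>Below a positive vector there is a largest multiple of \<open>a\<close>: the supremum of the
  admissible multipliers is again admissible, because the lattice norm makes the positive
  cone closed along the ray of \<open>a\<close>.\<close>

lemma largest_multiple_below:
  assumes y: "0 \<le> y"
  obtains L where "0 \<le> L" "L *\<^sub>R a \<le> y" "\<And>t. 0 \<le> t \<Longrightarrow> t *\<^sub>R a \<le> y \<Longrightarrow> t \<le> L"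
proof -
  define S where "S = {t. 0 \<le> t \<and> t *\<^sub>R a \<le> y}"
  have "0 \<in> S" using y by (simp add: S_def)
  have "t \<le> norm y" if "t \<in> S" for t
  proof -
    have "norm (t *\<^sub>R a) \<le> norm y"
      using that nonneg
      by (intro norm_mono_nonneg[OF lattice_norm]) (auto simp: S_def scaleR_nonneg_nonneg)
    then show ?thesis using that norm_eq_1 by (simp add: S_def)
  qed
  then have bdd: "bdd_above S" by (auto simp: bdd_above_def)
  define L where "L = Sup S"
  have upper: "t \<le> L" if "t \<in> S" for t
    unfolding L_def using that bdd by (rule cSup_upper)
  define d where "d = sup (L *\<^sub>R a - y) 0"
  have "norm d < e" if e: "0 < e" for e
  proof -
    obtain t where t: "t \<in> S" "L - e < t"
      using less_cSup_iff[of S "L - e"] \<open>0 \<in> S\<close> bdd e by (auto simp: L_def)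
    have "L *\<^sub>R a - y \<le> (L - t) *\<^sub>R a"
      using t(1) by (simp add: S_def scaleR_diff_left)
    moreover have "0 \<le> (L - t) *\<^sub>R a"
      using upper[OF t(1)] nonneg by (simp add: scaleR_nonneg_nonneg)
    ultimately have "norm d \<le> norm ((L - t) *\<^sub>R a)"
      unfolding d_def by (intro norm_mono_nonneg[OF lattice_norm]) simp_all
    also have "\<dots> = L - t"
      using upper[OF t(1)] norm_eq_1 by simp
    finally show ?thesis using t(2) by simp
  qed
  then have "d = 0"
    by (metis less_irrefl zero_less_norm_iff)
  then have "L *\<^sub>R a \<le> y"
    unfolding d_def by (metis diff_le_0_iff_le sup.cobounded1)
  moreover have "0 \<le> L"
    using upper[OF \<open>0 \<in> S\<close>] .
  ultimately show ?thesis
    using that upper by (auto simp: S_def)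
qed

text \<open>Removing the largest multiple of \<open>a\<close> from a positive vector leaves a part disjoint from
  \<open>a\<close>: otherwise the atom property would produce a larger admissible multiple.\<close>

lemma decomposition_nonneg:
  assumes y: "0 \<le> y"
  shows "\<exists>t. disjoint_el (y - t *\<^sub>R a) a"
proof -
  obtain L where L: "0 \<le> L" "L *\<^sub>R a \<le> y" and max: "\<And>t. 0 \<le> t \<Longrightarrow> t *\<^sub>R a \<le> y \<Longrightarrow> t \<le> L"
    using largest_multiple_below[OF y] by blast
  define r where "r = y - L *\<^sub>R a"
  have r: "0 \<le> r" using L by (simp add: r_def)
  obtain m where m: "0 \<le> m" "inf r a = m *\<^sub>R a"
    using atom_interval[OF atom nonneg, of "inf r a"] r nonneg by auto
  have "(L + m) *\<^sub>R a \<le> y"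
    using inf.cobounded1[of r a] m(2) by (simp add: r_def scaleR_add_left le_diff_eq add.commute)
  then have "m = 0"
    using max[of "L + m"] L m by simp
  then have "disjoint_el r a"
    using r nonneg m by (simp add: disjoint_el_def lat_abs_of_nonneg)
  then show ?thesis unfolding r_def by blast
qed

text \<open>Existence of the splitting for an arbitrary vector, via \<open>w = w\<^sup>+ - w\<^sup>-\<close>.\<close>

lemma decomposition: "\<exists>t. disjoint_el (w - t *\<^sub>R a) a"
proof -
  obtain s t where s: "disjoint_el (sup w 0 - s *\<^sub>R a) a" and t: "disjoint_el (sup (- w) 0 - t *\<^sub>R a) a"
    using decomposition_nonneg[of "sup w 0"] decomposition_nonneg[of "sup (- w) 0"] by auto
  have "w = sup w 0 - sup (- w) 0"
    using riesz_sup_add_distrib[of w 0 "- w"] by (simp add: sup_commute algebra_simps)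
  then have "w - (s - t) *\<^sub>R a = (sup w 0 - s *\<^sub>R a) - (sup (- w) 0 - t *\<^sub>R a)"
    by (simp add: algebra_simps)
  then show ?thesis
    using disjoint_el_diff[OF s t] by metis
qed

lemma coord_disjoint: "disjoint_el (w - atom_coord a w *\<^sub>R a) a"
  using decomposition atom_coord_eqI[OF nonneg nonzero] by metis

lemma coord_eqI: "disjoint_el (w - t *\<^sub>R a) a \<Longrightarrow> atom_coord a w = t"
  by (rule atom_coord_eqI[OF nonneg nonzero])

lemma coord_self [simp]: "atom_coord a a = 1"
  by (rule coord_eqI) simp

lemma coord_add: "atom_coord a (v + w) = atom_coord a v + atom_coord a w"
proof (rule coord_eqI)
  have "disjoint_el ((v - atom_coord a v *\<^sub>R a) + (w - atom_coord a w *\<^sub>R a)) a"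
    by (rule disjoint_el_add[OF coord_disjoint coord_disjoint])
  then show "disjoint_el (v + w - (atom_coord a v + atom_coord a w) *\<^sub>R a) a"
    by (simp add: algebra_simps)
qed

lemma coord_scaleR: "atom_coord a (r *\<^sub>R w) = r * atom_coord a w"
proof (rule coord_eqI)
  have "disjoint_el (r *\<^sub>R (w - atom_coord a w *\<^sub>R a)) a"
    by (rule disjoint_el_scaleR[OF coord_disjoint])
  then show "disjoint_el (r *\<^sub>R w - (r * atom_coord a w) *\<^sub>R a) a"
    by (simp add: algebra_simps)
qed

text \<open>The coordinate functional has norm at most one, since the component along \<open>a\<close> is
  dominated in modulus by the whole vector.\<close>

lemma coord_bound: "\<bar>atom_coord a w\<bar> \<le> norm w"
proof -
  let ?p = "atom_coord a w *\<^sub>R a"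
  have "disjoint_el ?p (w - ?p)"
    using disjoint_el_scaleR[OF disjoint_el_sym[OF coord_disjoint]] .
  then have "norm ?p \<le> norm (?p + (w - ?p))"
    by (intro lattice_normD[OF lattice_norm] disjoint_el_summand_le)
  then show ?thesis using norm_eq_1 by simp
qed

lemma coord_bounded_linear: "bounded_linear (atom_coord a)"
  by (rule bounded_linear_intro[where K = 1]) (auto simp: coord_add coord_scaleR coord_bound)

lemma coord_minus [simp]: "atom_coord a (- w) = - atom_coord a w"
  using coord_scaleR[of "-1" w] by simp

end

section \<open>Isometries and convex transitivity\<close>

lemma isometry_groupD:
  assumes "T \<in> isometry_group"
  shows "linear T" "surj T" "norm (T x) = norm x"
  using assms by (auto simp: isometry_group_def)

lemma isometry_group_inv:
  fixes T :: "'a::real_normed_vector \<Rightarrow> 'a"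
  assumes T: "T \<in> isometry_group"
  shows "inv T \<in> isometry_group" "inv T (T x) = x"
proof -
  note lT = isometry_groupD(1)[OF T] and sT = isometry_groupD(2)[OF T]
  have "inj T"
  proof (rule injI)
    fix x y assume "T x = T y"
    then have "norm (T (x - y)) = 0" using lT by (simp add: linear_diff)
    then show "x = y" using isometry_groupD(3)[OF T] by simp
  qed
  then have left: "\<And>x. inv T (T x) = x" by simp
  have right: "\<And>x. T (inv T x) = x" using sT by (simp add: surj_f_inv_f)
  have "linear (inv T)"
  proof (rule linearI)
    show "inv T (x + y) = inv T x + inv T y" for x y
      using left[of "inv T x + inv T y"] right lT by (simp add: linear_add)
    show "inv T (r *\<^sub>R x) = r *\<^sub>R inv T x" for r x
      using left[of "r *\<^sub>R inv T x"] right lT by (simp add: linear_scale)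
  qed
  moreover have "surj (inv T)" by (metis left surjI)
  moreover have "norm (inv T x) = norm x" for x by (metis right T isometry_groupD(3))
  ultimately show "inv T \<in> isometry_group" by (simp add: isometry_group_def)
  show "inv T (T x) = x" by (rule left)
qed

lemma convex_sublevel_set:
  assumes "convex_on UNIV f"
  shows "convex {x. f x \<le> c}"
proof (rule convexI)
  fix x y and u v :: real
  assume xy: "x \<in> {x. f x \<le> c}" "y \<in> {x. f x \<le> c}" and uv: "0 \<le> u" "0 \<le> v" "u + v = 1"
  have "f (u *\<^sub>R x + v *\<^sub>R y) \<le> u * f x + v * f y"
    using assms uv by (simp add: convex_on_def)
  also have "\<dots> \<le> u * c + v * c"
    using xy uv by (intro add_mono mult_left_mono) auto
  finally show "u *\<^sub>R x + v *\<^sub>R y \<in> {x. f x \<le> c}"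
    using uv by (simp add: distrib_right[symmetric])
qed

lemma linear_convex_on: "linear f \<Longrightarrow> convex_on UNIV (f :: 'a::real_vector \<Rightarrow> real)"
  by (simp add: convex_on_def linear_add linear_scale)

text \<open>In a convex-transitive space, a continuous convex function bounded on the orbit of one
  unit vector is bounded by the same constant on the whole unit ball: its sublevel set is
  closed and convex, hence contains the closed convex hull of the orbit.\<close>

lemma convex_transitive_orbit_bound:
  fixes y v :: "'a::real_normed_vector"
  assumes "convex_transitive TYPE('a)" and y: "norm y = 1"
    and f: "continuous_on UNIV f" "convex_on UNIV f"
    and orbit: "\<And>T. T \<in> isometry_group \<Longrightarrow> f (T y) \<le> c"
    and v: "norm v \<le> 1"
  shows "f v \<le> c"
proof -
  let ?C = "{x. f x \<le> c}"
  have "closed ?C"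
    using f(1) continuous_on_const by (rule closed_Collect_le)
  moreover have "convex hull {T y | T. T \<in> isometry_group} \<subseteq> ?C"
    using orbit convex_sublevel_set[OF f(2)] by (intro hull_minimal) auto
  ultimately have "closure (convex hull {T y | T. T \<in> isometry_group}) \<subseteq> ?C"
    by (rule closure_minimal[rotated])
  then have "cball 0 1 \<subseteq> ?C"
    using assms(1) y by (simp add: convex_transitive_def)
  then show ?thesis using v by auto
qed

section \<open>Convex-transitive lattices with an atom\<close>

locale transitive_unit_atom = unit_atom a
  for a :: "'a::{real_normed_vector, lattice, ordered_real_vector}" +
  assumes convex_transitive: "convex_transitive TYPE('a)"
    and disjointness_preserving: "\<forall>T\<in>(isometry_group :: ('a \<Rightarrow> 'a) set). disjointness_preserving T"
begin

lemma isometry_disjoint: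
  "T \<in> isometry_group \<Longrightarrow> disjoint_el x y \<Longrightarrow> disjoint_el (T x) (T (y::'a))"
  using disjointness_preserving unfolding disjointness_preserving_def by blast

text \<open>An isometry moves the atom either to a vector with zero coordinate along \<open>a\<close> or to
  \<open>\<plusminus>a\<close>: pulling back the splitting of \<open>T a\<close> along \<open>a\<close> by \<open>T\<^sup>-\<^sup>1\<close> splits the atom \<open>a\<close> into
  two disjoint parts, one of which must vanish.\<close>

lemma isometry_image_of_atom:
  assumes T: "T \<in> isometry_group"
  shows "atom_coord a (T a) = 0 \<or> T a = a \<or> T a = - a"
proof -
  let ?t = "atom_coord a (T a)" and ?S = "inv T"
  define R where "R = T a - ?t *\<^sub>R a"
  note S = isometry_group_inv[OF T]
  have "disjoint_el (?S (?t *\<^sub>R a)) (?S R)"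
    using disjoint_el_scaleR[OF disjoint_el_sym[OF coord_disjoint]]
    by (intro isometry_disjoint[OF S(1)]) (simp add: R_def)
  moreover have "a = ?S (?t *\<^sub>R a + R)"
    using S(2)[of a] by (simp add: R_def)
  then have "a = ?S (?t *\<^sub>R a) + ?S R"
    using linear_add[OF isometry_groupD(1)[OF S(1)]] by simp
  ultimately have "?S (?t *\<^sub>R a) = 0 \<or> ?S R = 0"
    using atom_disjoint_split[OF atom nonneg] by blast
  moreover have "?S w = 0 \<longleftrightarrow> w = 0" for w
    using isometry_groupD(3)[OF S(1), of w] by (metis norm_eq_zero)
  ultimately have "?t = 0 \<or> T a = ?t *\<^sub>R a"
    using nonzero by (auto simp: R_def)
  moreover have "norm (T a) = 1"
    using isometry_groupD(3)[OF T] norm_eq_1 by simp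
  ultimately show ?thesis
  proof (elim disjE)
    assume Ta: "T a = ?t *\<^sub>R a"
    with \<open>norm (T a) = 1\<close> have "\<bar>?t\<bar> = 1"
      using norm_eq_1 by (metis mult.right_neutral norm_scaleR)
    then have "?t = 1 \<or> ?t = - 1" by linarith
    with Ta show ?thesis by auto
  qed simp
qed

lemma coord_isometry_image_le:
  assumes T: "T \<in> isometry_group" and z: "disjoint_el z a" "norm z \<le> 1"
  shows "atom_coord a (T a) + atom_coord a (T z) \<le> 1"
proof -
  have dT: "disjoint_el (T a) (T z)"
    using isometry_disjoint[OF T disjoint_el_sym[OF z(1)]] .
  consider "atom_coord a (T a) = 0" | "T a = a" | "T a = - a"
    using isometry_image_of_atom[OF T] by blast
  then show ?thesis
  proof cases
    case 1
    then show ?thesis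
      using coord_bound[of "T z"] isometry_groupD(3)[OF T] z(2) by simp
  next
    case 2
    then have "atom_coord a (T z) = 0"
      using dT by (intro coord_eqI) (simp add: disjoint_el_sym)
    with 2 show ?thesis by simp
  next
    case 3
    then have "atom_coord a (T z) = 0"
      using disjoint_el_minus[OF dT] by (intro coord_eqI) (simp add: disjoint_el_sym)
    with 3 show ?thesis by simp
  qed
qed

text \<open>Hence \<open>\<parallel>a + z\<parallel> \<le> 1\<close>: otherwise \<open>\<phi> \<le> 1/\<parallel>a + z\<parallel> < 1\<close> on the orbit of the normalised
  \<open>a + z\<close>, hence on the unit ball, contradicting \<open>\<phi>(a) = 1\<close>.\<close>

lemma norm_add_disjoint_le:
  assumes z: "disjoint_el z a" "norm z = 1"
  shows "norm (a + z) \<le> 1"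
proof (rule ccontr)
  define c where "c = norm (a + z)"
  assume "\<not> norm (a + z) \<le> 1"
  then have c: "1 < c" by (simp add: c_def)
  let ?y = "(1 / c) *\<^sub>R (a + z)"
  have "atom_coord a a \<le> 1 / c"
  proof (rule convex_transitive_orbit_bound[OF convex_transitive, where f = "atom_coord a"])
    show "norm ?y = 1" using c by (auto simp: c_def)
    show "continuous_on UNIV (atom_coord a)" "convex_on UNIV (atom_coord a)"
      using coord_bounded_linear
      by (simp_all add: linear_continuous_on linear_convex_on bounded_linear.linear)
    show "atom_coord a (T ?y) \<le> 1 / c" if T: "T \<in> isometry_group" for T
    proof -
      have "atom_coord a (T ?y) = (1 / c) * (atom_coord a (T a) + atom_coord a (T z))"
        using isometry_groupD(1)[OF T] by (simp add: linear_add linear_scale coord_add coord_scaleR add_divide_distrib)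
      also have "\<dots> \<le> 1 / c"
        using coord_isometry_image_le[OF T z(1)] z(2) c by (simp add: divide_right_mono)
      finally show ?thesis .
    qed
  qed (simp add: norm_eq_1)
  with c show False by simp
qed

text \<open>The orbit of \<open>a\<close> lies in the closed convex set \<open>\<parallel>v - a\<parallel> + 2 \<phi>(v) \<le> 2\<close>, where \<open>\<phi>\<close> is the
  coordinate along \<open>a\<close>; by convex transitivity so does the whole unit ball.\<close>

lemma unit_ball_bound:
  assumes v: "norm v \<le> 1"
  shows "norm (v - a) + 2 * atom_coord a v \<le> 2"
proof (rule convex_transitive_orbit_bound[OF convex_transitive norm_eq_1 _ _ _ v])
  show "continuous_on UNIV (\<lambda>v. norm (v - a) + 2 * atom_coord a v)"
    using coord_bounded_linear by (intro continuous_intros linear_continuous_on)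
  have "convex_on UNIV (\<lambda>v. dist a v + 2 * atom_coord a v)"
    using coord_bounded_linear
    by (intro convex_on_add convex_on_dist convex_on_cmul linear_convex_on bounded_linear.linear)
      simp_all
  then show "convex_on UNIV (\<lambda>v. norm (v - a) + 2 * atom_coord a v)"
    by (simp add: dist_norm norm_minus_commute)
  show "norm (T a - a) + 2 * atom_coord a (T a) \<le> 2" if T: "T \<in> isometry_group" for T
  proof -
    have "norm (T a - a) \<le> norm (T a) + norm a" by (rule norm_triangle_ineq4)
    moreover have "norm (- a - a) = 2"
      using norm_eq_1 by (simp add: norm_minus_commute[of "- a"] scaleR_2[symmetric])
    ultimately show ?thesis
      using isometry_image_of_atom[OF T] isometry_groupD(3)[OF T, of a] norm_eq_1 by auto
  qed
qed

text \<open>No nonzero vector is disjoint from \<open>a\<close>: for a unit vector \<open>z\<close> disjoint from \<open>a\<close>, the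
  vector \<open>a + z\<close> lies in the unit ball and has coordinate one, which forces \<open>z = 0\<close>.\<close>

lemma disjoint_eq_0:
  assumes z: "disjoint_el z a"
  shows "z = 0"
proof (rule ccontr)
  assume "z \<noteq> 0"
  define u where "u = (1 / norm z) *\<^sub>R z"
  have u: "disjoint_el u a" "norm u = 1"
    using disjoint_el_scaleR[OF z] \<open>z \<noteq> 0\<close> by (simp_all add: u_def)
  have "atom_coord a u = 0"
    using u(1) by (intro coord_eqI) simp
  then have "norm u + 2 \<le> 2"
    using unit_ball_bound[OF norm_add_disjoint_le[OF u]] by (simp add: coord_add)
  with u(2) show False by simp
qed

lemma span_atom: "span {a} = UNIV"
proof -
  have "w \<in> span {a}" for w
  proof -
    have "w = atom_coord a w *\<^sub>R a"
      using disjoint_eq_0[OF coord_disjoint[of w]] by simp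
    then show ?thesis by (metis span_base span_mul singletonI)
  qed
  then show ?thesis by blast
qed

end

theorem theorem4p2:
  assumes "banach_lattice TYPE('a::{banach, lattice, ordered_real_vector})"
    and "convex_transitive TYPE('a)"
    and "\<forall>T\<in>(isometry_group :: ('a \<Rightarrow> 'a) set). disjointness_preserving T"
    and "\<exists>x::'a. norm x = 1 \<and> is_atom x"
  shows "\<exists>e::'a. e \<noteq> 0 \<and> span {e} = UNIV"
proof -
  obtain x :: 'a where x: "norm x = 1" "is_atom x"
    using assms(4) by blast
  have lattice_norm: "lattice_norm TYPE('a)"
    using assms(1) by (simp add: banach_lattice_def)
  have "norm (lat_abs x) = 1" "is_atom (lat_abs x)"
    using x norm_lat_abs[OF lattice_norm] by (auto simp: is_atom_def)
  then interpret transitive_unit_atom "lat_abs x"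
    using lattice_norm assms(2,3) lat_abs_nonneg by unfold_locales
  show ?thesis
    using nonzero span_atom by blast
qed

end
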